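(* Let $X$ be a CAT(0) Euclidean polygonal complex and let $x_1,x_2,x_3,x_4\in X$. If $\overline{x_1x_2}\cap\overline{x_3x_4}\neq\emptyset$, then $$\overline{x_1x_3}\cap\overline{x_2x_4}\subseteq\overline{x_1x_2}\cap\overline{x_3x_4}\quad\text{and}\quad\overline{x_1x_4}\cap\overline{x_2x_3}\subseteq\overline{x_1x_2}\cap\overline{x_3x_4}.$$ Hence, for $\{i,j,k,l\}=\{i',j',k',l'\}=\{1,2,3,4\}$, we have $\overline{x_ix_j}\cap\overline{x_kx_l}=\overline{x_{i'}x_{j'}}\cap\overline{x_{k'}x_{l'}}$ whenever both intersections are non-empty.
   Context: A CAT(0) Euclidean polygonal complex is a 2-dimensional polygonal complex whose cells are convex Euclidean polygons, with its induced length metric, assumed CAT(0). $\overline{ab}$ denotes the unique geodesic segment between $a$ and $b$. *)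

theory Defs
  imports "HOL-Analysis.Analysis"
begin

definition geodesic :: "'a::metric_space set \<Rightarrow> (real \<Rightarrow> 'a) \<Rightarrow> 'a \<Rightarrow> 'a \<Rightarrow> bool" where
  "geodesic X g a b \<longleftrightarrow> g 0 = a \<and> g (dist a b) = b \<and> g ` {0..dist a b} \<subseteq> X \<and>
     (\<forall>s\<in>{0..dist a b}. \<forall>t\<in>{0..dist a b}. dist (g s) (g t) = \<bar>s - t\<bar>)"

definition geodesic_space :: "'a::metric_space set \<Rightarrow> bool" where
  "geodesic_space X \<longleftrightarrow> (\<forall>a\<in>X. \<forall>b\<in>X. \<exists>g. geodesic X g a b)"

definition cmp_pt :: "real^2 \<Rightarrow> real^2 \<Rightarrow> real \<Rightarrow> real \<Rightarrow> real^2" where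
  "cmp_pt a b t d = (if d = 0 then a else a + (t / d) *\<^sub>R (b - a))"

definition CAT0 :: "'a::metric_space set \<Rightarrow> bool" where
  "CAT0 X \<longleftrightarrow> geodesic_space X \<and>
    (\<forall>x\<in>X. \<forall>y\<in>X. \<forall>z\<in>X. \<forall>g1 g2 g3. \<forall>x' y' z' :: real^2.
      geodesic X g1 x y \<and> geodesic X g2 y z \<and> geodesic X g3 z x \<and>
      dist x' y' = dist x y \<and> dist y' z' = dist y z \<and> dist z' x' = dist z x \<longrightarrow>
      (let T = [(g1, x', y', dist x y), (g2, y', z', dist y z), (g3, z', x', dist z x)] in
       \<forall>(g, a, b, d)\<in>set T. \<forall>(g', a', b', d')\<in>set T.
         \<forall>s\<in>{0..d}. \<forall>t\<in>{0..d'}.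
           dist (g s) (g' t) \<le> dist (cmp_pt a b s d) (cmp_pt a' b' t d')))"

definition seg :: "'a::metric_space set \<Rightarrow> 'a \<Rightarrow> 'a \<Rightarrow> 'a set" where
  "seg X a b = (THE S. \<exists>g. geodesic X g a b \<and> S = g ` {0..dist a b})"

text \<open>Cells are indexed by 'i; cell i is the convex Euclidean polygon shape i in the plane,
  mapped into the space by p i.  Points are glued along faces by isometries.\<close>

definition convex_polygon :: "(real^2) set \<Rightarrow> bool" where
  "convex_polygon P \<longleftrightarrow> polytope P \<and> aff_dim P = 2"

definition isometry_onto :: "(real^2 \<Rightarrow> real^2) \<Rightarrow> (real^2) set \<Rightarrow> (real^2) set \<Rightarrow> bool" where
  "isometry_onto h F G \<longleftrightarrow> h ` F = G \<and> (\<forall>u\<in>F. \<forall>v\<in>F. dist (h u) (h v) = dist u v)"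

text \<open>m-strings: chains of steps (i,a,b) inside cells; consecutive steps meet in X.\<close>
definition chain_ok :: "('i \<Rightarrow> (real^2) set) \<Rightarrow> ('i \<Rightarrow> real^2 \<Rightarrow> 'a) \<Rightarrow> 'a \<Rightarrow> 'a
    \<Rightarrow> ('i \<times> (real^2) \<times> (real^2)) list \<Rightarrow> bool" where
  "chain_ok shape p x y cs \<longleftrightarrow> cs \<noteq> [] \<and>
     (\<forall>(i, a, b)\<in>set cs. a \<in> shape i \<and> b \<in> shape i) \<and>
     (case hd cs of (i, a, b) \<Rightarrow> p i a = x) \<and>
     (case last cs of (i, a, b) \<Rightarrow> p i b = y) \<and>
     (\<forall>k. Suc k < length cs \<longrightarrow>
        (case cs ! k of (i, a, b) \<Rightarrow> p i b) = (case cs ! Suc k of (j, a', b') \<Rightarrow> p j a'))"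

definition chain_len :: "('i \<times> (real^2) \<times> (real^2)) list \<Rightarrow> real" where
  "chain_len cs = sum_list (map (\<lambda>(i, a, b). dist a b) cs)"

definition euclidean_polygonal_complex ::
    "'a::metric_space set \<Rightarrow> ('i \<Rightarrow> (real^2) set) \<Rightarrow> ('i \<Rightarrow> real^2 \<Rightarrow> 'a) \<Rightarrow> bool" where
  "euclidean_polygonal_complex X shape p \<longleftrightarrow>
     (\<forall>i. convex_polygon (shape i)) \<and>
     (\<forall>i. inj_on (p i) (shape i)) \<and>
     X = (\<Union>i. p i ` shape i) \<and>
     (\<forall>i j u v. u \<in> shape i \<and> v \<in> shape j \<and> p i u = p j v \<longrightarrow>
        (\<exists>F G h. F face_of shape i \<and> u \<in> rel_interior F \<and>
                 G face_of shape j \<and> v \<in> rel_interior G \<and>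
                 isometry_onto h F G \<and> (\<forall>w\<in>F. p i w = p j (h w)))) \<and>
     (\<forall>x\<in>X. \<forall>y\<in>X. dist x y = Inf (chain_len ` {cs. chain_ok shape p x y cs}))"

end

theory Submission
  imports Defs
begin

text \<open>Only the CAT(0) condition matters. A degenerate comparison triangle shows that in a
  CAT(0) space every point p with d(a,p) + d(p,b) = d(a,b) lies on every geodesic from a to b,
  so the segment from a to b is the metric interval of such points. For metric intervals the
  claim holds in any metric space: if q lies on the segments x1x2 and x3x4 and p on x1x3 and
  x2x4, then adding up triangle inequalities through p and through q gives
  d(x1,x2) + d(x3,x4) \<le> d(x1,x3) + d(x2,x4) \<le> d(x1,x2) + d(x3,x4), so all of them are
  equalities and p lies on x1x2 and x3x4. The three ways of pairing up four points are then
  each contained in any nonempty one, hence the nonempty ones coincide.\<close>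

lemma geodesic_dist:
  assumes "geodesic X g a b" "s \<in> {0..dist a b}" "t \<in> {0..dist a b}"
  shows "dist (g s) (g t) = \<bar>s - t\<bar>"
  using assms unfolding geodesic_def by blast

lemma geodesic_in:
  assumes "geodesic X g a b" "t \<in> {0..dist a b}"
  shows "g t \<in> X"
  using assms unfolding geodesic_def by blast

lemma geodesic_reverse:
  assumes "geodesic X g a b"
  shows "geodesic X (\<lambda>t. g (dist a b - t)) b a"
  using assms unfolding geodesic_def
  by (auto simp: dist_commute image_subset_iff abs_minus_commute)

lemma cmp_pt_scaleR:
  fixes e :: "real^2" and u v t :: real
  shows "cmp_pt (u *\<^sub>R e) (v *\<^sub>R e) t \<bar>v - u\<bar> = (u + t * sgn (v - u)) *\<^sub>R e"
proof (cases "u = v")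
  case False
  then have "t / \<bar>v - u\<bar> * (v - u) = t * sgn (v - u)"
    by (auto simp: sgn_if field_simps)
  then show ?thesis
    using False by (simp add: cmp_pt_def scaleR_add_left flip: scaleR_diff_left)
qed (simp add: cmp_pt_def)

lemma CAT0_comparison:
  assumes "CAT0 X" "x \<in> X" "y \<in> X" "z \<in> X"
    and "geodesic X g1 x y" "geodesic X g2 y z" "geodesic X g3 z x"
    and "dist x' y' = dist x y" "dist y' z' = dist y z" "dist z' x' = dist z x"
    and "s \<in> {0..dist x y}" "t \<in> {0..dist z x}"
  shows "dist (g1 s) (g3 t) \<le> dist (cmp_pt x' y' s (dist x y)) (cmp_pt z' x' t (dist z x))"
proof -
  have "\<forall>(g, a, b, d)\<in>set [(g1, x', y', dist x y), (g2, y', z', dist y z), (g3, z', x', dist z x)].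
        \<forall>(g', a', b', d')\<in>set [(g1, x', y', dist x y), (g2, y', z', dist y z), (g3, z', x', dist z x)].
          \<forall>s\<in>{0..d}. \<forall>t\<in>{0..d'}. dist (g s) (g' t) \<le> dist (cmp_pt a b s d) (cmp_pt a' b' t d')"
    using assms(1-10) unfolding CAT0_def Let_def by meson
  then show ?thesis
    using assms(11,12) by simp
qed

lemma CAT0_geodesic_exists:
  assumes "CAT0 X" "a \<in> X" "b \<in> X"
  obtains g where "geodesic X g a b"
  using assms unfolding CAT0_def geodesic_space_def by blast

definition metric_interval :: "'a::metric_space set \<Rightarrow> 'a \<Rightarrow> 'a \<Rightarrow> 'a set" where
  "metric_interval X a b = {p \<in> X. dist a p + dist p b = dist a b}"

lemma metric_interval_commute: "metric_interval X a b = metric_interval X b a"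
  unfolding metric_interval_def by (auto simp: dist_commute add.commute)

lemma metric_interval_dist_le:
  assumes "p \<in> metric_interval X a b"
  shows "dist a p \<le> dist a b"
proof -
  have "dist a p + dist p b = dist a b"
    using assms unfolding metric_interval_def by simp
  then show ?thesis
    using zero_le_dist[of p b] by linarith
qed

lemma geodesic_image_subset_metric_interval:
  assumes "geodesic X g a b"
  shows "g ` {0..dist a b} \<subseteq> metric_interval X a b"
proof
  fix p assume "p \<in> g ` {0..dist a b}"
  then obtain t where t: "t \<in> {0..dist a b}" and p: "p = g t" by blast
  have "dist a p = t" "dist p b = dist a b - t"
    using geodesic_dist[OF assms, of 0 t] geodesic_dist[OF assms, of t "dist a b"] t p assms
    by (auto simp: geodesic_def)
  then show "p \<in> metric_interval X a b"
    using geodesic_in[OF assms t] p unfolding metric_interval_def by simp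
qed

text \<open>The comparison triangle of (a, p, b) is degenerate, and p (on the side from a to p)
  and g (dist a p) (on the reversed side from b to a) have the same comparison point.\<close>
lemma CAT0_geodesic_through:
  assumes cat: "CAT0 X" and g: "geodesic X g a b" and "a \<in> X" "b \<in> X"
    and p: "p \<in> metric_interval X a b"
  shows "g (dist a p) = p"
proof -
  have "p \<in> X" and between: "dist a p + dist p b = dist a b"
    using p unfolding metric_interval_def by auto
  obtain g1 g2 where g1: "geodesic X g1 a p" and g2: "geodesic X g2 p b"
    using CAT0_geodesic_exists cat \<open>a \<in> X\<close> \<open>b \<in> X\<close> \<open>p \<in> X\<close> by metis
  define e :: "real^2" where "e = axis 1 1"
  define s where "s = dist a p"
  define D where "D = dist a b"
  have "norm e = 1" unfolding e_def by simp
  have s: "0 \<le> s" "s \<le> D" "dist p b = D - s"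
    using between metric_interval_dist_le[OF p] unfolding s_def D_def by auto
  have sides: "dist (0 *\<^sub>R e) (s *\<^sub>R e) = dist a p" "dist (s *\<^sub>R e) (D *\<^sub>R e) = dist p b"
    "dist (D *\<^sub>R e) (0 *\<^sub>R e) = dist b a"
    using \<open>norm e = 1\<close> s unfolding s_def D_def by (auto simp: dist_commute)
  have "s \<in> {0..dist a p}" "D - s \<in> {0..dist b a}"
    using s unfolding s_def D_def by (auto simp: dist_commute)
  then have "dist (g1 s) (g (dist a b - (D - s)))
      \<le> dist (cmp_pt (0 *\<^sub>R e) (s *\<^sub>R e) s (dist a p)) (cmp_pt (D *\<^sub>R e) (0 *\<^sub>R e) (D - s) (dist b a))"
    by (rule CAT0_comparison[OF cat \<open>a \<in> X\<close> \<open>p \<in> X\<close> \<open>b \<in> X\<close> g1 g2 geodesic_reverse[OF g] sides])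
  also have "cmp_pt (0 *\<^sub>R e) (s *\<^sub>R e) s (dist a p) = s *\<^sub>R e"
    using cmp_pt_scaleR[of 0 e s s] s unfolding s_def by (simp add: sgn_if)
  also have "cmp_pt (D *\<^sub>R e) (0 *\<^sub>R e) (D - s) (dist b a) = s *\<^sub>R e"
    using cmp_pt_scaleR[of D e 0 "D - s"] s unfolding D_def
    by (cases "D = 0") (auto simp: dist_commute sgn_if)
  finally have "g1 s = g s"
    unfolding D_def by simp
  moreover have "g1 s = p"
    using g1 unfolding geodesic_def s_def by simp
  ultimately show ?thesis
    unfolding s_def by simp
qed

lemma CAT0_geodesic_image:
  assumes "CAT0 X" "geodesic X g a b" "a \<in> X" "b \<in> X"
  shows "g ` {0..dist a b} = metric_interval X a b"
proof
  show "metric_interval X a b \<subseteq> g ` {0..dist a b}"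
  proof
    fix p assume p: "p \<in> metric_interval X a b"
    then have "dist a p \<in> {0..dist a b}"
      using metric_interval_dist_le[OF p] by simp
    then show "p \<in> g ` {0..dist a b}"
      using CAT0_geodesic_through[OF assms p] by (metis rev_image_eqI)
  qed
qed (rule geodesic_image_subset_metric_interval[OF assms(2)])

lemma CAT0_seg_eq_metric_interval:
  assumes cat: "CAT0 X" and "a \<in> X" "b \<in> X"
  shows "seg X a b = metric_interval X a b"
proof -
  obtain g where "geodesic X g a b"
    using CAT0_geodesic_exists assms by blast
  then have "(THE S. \<exists>g. geodesic X g a b \<and> S = g ` {0..dist a b}) = metric_interval X a b"
    using CAT0_geodesic_image[OF cat _ assms(2,3)] by (intro the_equality) auto
  then show ?thesis
    unfolding seg_def .
qed

lemma metric_interval_swap_subset: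
  assumes "metric_interval X a b \<inter> metric_interval X c d \<noteq> {}"
  shows "metric_interval X a c \<inter> metric_interval X b d \<subseteq> metric_interval X a b \<inter> metric_interval X c d"
proof
  obtain q where "q \<in> metric_interval X a b" "q \<in> metric_interval X c d"
    using assms by blast
  then have q: "dist a q + dist q b = dist a b" "dist c q + dist q d = dist c d"
    unfolding metric_interval_def by auto
  fix p assume "p \<in> metric_interval X a c \<inter> metric_interval X b d"
  then have p: "dist a p + dist p c = dist a c" "dist b p + dist p d = dist b d" and "p \<in> X"
    unfolding metric_interval_def by auto
  have "dist a b \<le> dist a p + dist p b" "dist c d \<le> dist c p + dist p d"
    "dist a c \<le> dist a q + dist q c" "dist b d \<le> dist b q + dist q d"
    by (rule dist_triangle)+
  then have "dist a p + dist p b = dist a b" "dist c p + dist p d = dist c d"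
    using p q by (simp_all add: dist_commute)
  then show "p \<in> metric_interval X a b \<inter> metric_interval X c d"
    using \<open>p \<in> X\<close> unfolding metric_interval_def by simp
qed

lemma metric_interval_swap_subsets:
  assumes "metric_interval X a b \<inter> metric_interval X c d \<noteq> {}"
  shows "metric_interval X a c \<inter> metric_interval X b d \<subseteq> metric_interval X a b \<inter> metric_interval X c d"
    and "metric_interval X a d \<inter> metric_interval X b c \<subseteq> metric_interval X a b \<inter> metric_interval X c d"
  using metric_interval_swap_subset[OF assms] metric_interval_swap_subset[of X a b d c] assms
  by (simp_all add: metric_interval_commute[of X d c])

definition matching_intersections :: "'a::metric_space set \<Rightarrow> 'a \<Rightarrow> 'a \<Rightarrow> 'a \<Rightarrow> 'a \<Rightarrow> 'a set set" where
  "matching_intersections X a b c d =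
    {metric_interval X a b \<inter> metric_interval X c d,
     metric_interval X a c \<inter> metric_interval X b d,
     metric_interval X a d \<inter> metric_interval X b c}"

lemma matching_intersections_absorb:
  assumes "P \<in> matching_intersections X a b c d" "Q \<in> matching_intersections X a b c d" "P \<noteq> {}"
  shows "Q \<subseteq> P"
proof -
  note commute = metric_interval_commute[of X c b] metric_interval_commute[of X d b]
    metric_interval_commute[of X d c]
  from assms(1) consider
      "P = metric_interval X a b \<inter> metric_interval X c d"
    | "P = metric_interval X a c \<inter> metric_interval X b d"
    | "P = metric_interval X a d \<inter> metric_interval X b c"
    unfolding matching_intersections_def by blast
  then show ?thesis
  proof cases
    case 1
    then show ?thesis
      using metric_interval_swap_subsets[of X a b c d] assms(2,3)
      unfolding matching_intersections_def by auto
  next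
    case 2
    then show ?thesis
      using metric_interval_swap_subsets[of X a c b d] assms(2,3)
      unfolding matching_intersections_def by (auto simp: commute)
  next
    case 3
    then show ?thesis
      using metric_interval_swap_subsets[of X a d b c] assms(2,3)
      unfolding matching_intersections_def by (auto simp: commute)
  qed
qed

lemma perfect_matching_cases:
  fixes F :: "'a \<Rightarrow> 'a \<Rightarrow> 'b set"
  assumes F_commute: "\<And>u v. F u v = F v u"
    and "distinct [a, b, c, d]" "{i, j, k, l} = {a, b, c, d}"
  shows "F i j \<inter> F k l \<in> {F a b \<inter> F c d, F a c \<inter> F b d, F a d \<inter> F b c}"
proof -
  have "card (set [i, j, k, l]) = length [i, j, k, l]"
    using distinct_card[OF assms(2)] assms(3) by simp
  then have "distinct [i, j, k, l]"
    by (rule card_distinct)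
  moreover have "i \<in> {a, b, c, d}" "j \<in> {a, b, c, d}" "k \<in> {a, b, c, d}" "l \<in> {a, b, c, d}"
    using assms(3) by blast+
  ultimately show ?thesis
    using assms(2)
    by (simp only: insert_iff empty_iff simp_thms distinct.simps list.set)
      (elim disjE conjE; simp only: F_commute Int_commute insert_iff simp_thms)
qed

theorem lemma8p2:
  fixes shape :: "'i \<Rightarrow> (real^2) set" and p :: "'i \<Rightarrow> real^2 \<Rightarrow> 'a::metric_space"
    and X :: "'a set" and x :: "nat \<Rightarrow> 'a"
  assumes "euclidean_polygonal_complex X shape p"
    and "CAT0 X"
    and "\<forall>n\<in>{1..4}. x n \<in> X"
  shows "(seg X (x 1) (x 2) \<inter> seg X (x 3) (x 4) \<noteq> {} \<longrightarrow>
           seg X (x 1) (x 3) \<inter> seg X (x 2) (x 4) \<subseteq> seg X (x 1) (x 2) \<inter> seg X (x 3) (x 4) \<and>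
           seg X (x 1) (x 4) \<inter> seg X (x 2) (x 3) \<subseteq> seg X (x 1) (x 2) \<inter> seg X (x 3) (x 4))
       \<and> (\<forall>i j k l i' j' k' l'.
            {i, j, k, l} = {1, 2, 3, 4} \<and> {i', j', k', l'} = {1, 2, 3, 4} \<and>
            seg X (x i) (x j) \<inter> seg X (x k) (x l) \<noteq> {} \<and>
            seg X (x i') (x j') \<inter> seg X (x k') (x l') \<noteq> {} \<longrightarrow>
            seg X (x i) (x j) \<inter> seg X (x k) (x l) = seg X (x i') (x j') \<inter> seg X (x k') (x l'))"
proof -
  define I where "I u v = metric_interval X (x u) (x v)" for u v
  have "{1..4::nat} = {1, 2, 3, 4}"
    by auto
  then have seg_I: "seg X (x u) (x v) = I u v" if "u \<in> {1, 2, 3, 4}" "v \<in> {1, 2, 3, 4}" for u v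
    using CAT0_seg_eq_metric_interval[OF assms(2)] assms(3) that unfolding I_def by blast
  have I_commute: "I u v = I v u" for u v
    unfolding I_def by (rule metric_interval_commute)
  have matching: "I i j \<inter> I k l \<in> matching_intersections X (x 1) (x 2) (x 3) (x 4)"
    if "{i, j, k, l} = {1, 2, 3, 4}" for i j k l
    using perfect_matching_cases[of I 1 2 3 4, OF I_commute _ that]
    unfolding I_def matching_intersections_def by simp
  have pairings_agree: "I i j \<inter> I k l = I i' j' \<inter> I k' l'"
    if "{i, j, k, l} = {1, 2, 3, 4}" "{i', j', k', l'} = {1, 2, 3, 4}"
      "I i j \<inter> I k l \<noteq> {}" "I i' j' \<inter> I k' l' \<noteq> {}" for i j k l i' j' k' l'
    using matching_intersections_absorb[OF matching[OF that(1)] matching[OF that(2)] that(3)]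
      matching_intersections_absorb[OF matching[OF that(2)] matching[OF that(1)] that(4)]
    by (rule subset_antisym[rotated])
  show ?thesis
  proof (intro conjI allI impI)
    show "seg X (x 1) (x 3) \<inter> seg X (x 2) (x 4) \<subseteq> seg X (x 1) (x 2) \<inter> seg X (x 3) (x 4)"
      "seg X (x 1) (x 4) \<inter> seg X (x 2) (x 3) \<subseteq> seg X (x 1) (x 2) \<inter> seg X (x 3) (x 4)"
      if "seg X (x 1) (x 2) \<inter> seg X (x 3) (x 4) \<noteq> {}"
      using metric_interval_swap_subsets[of X "x 1" "x 2" "x 3" "x 4"] that
      by (simp_all add: seg_I I_def)
  next
    fix i j k l i' j' k' l' :: nat
    assume "{i, j, k, l} = {1, 2, 3, 4} \<and> {i', j', k', l'} = {1, 2, 3, 4} \<and>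
      seg X (x i) (x j) \<inter> seg X (x k) (x l) \<noteq> {} \<and> seg X (x i') (x j') \<inter> seg X (x k') (x l') \<noteq> {}"
    moreover from this have "i \<in> {1, 2, 3, 4}" "j \<in> {1, 2, 3, 4}" "k \<in> {1, 2, 3, 4}" "l \<in> {1, 2, 3, 4}"
      "i' \<in> {1, 2, 3, 4}" "j' \<in> {1, 2, 3, 4}" "k' \<in> {1, 2, 3, 4}" "l' \<in> {1, 2, 3, 4}"
      by blast+
    ultimately show "seg X (x i) (x j) \<inter> seg X (x k) (x l) = seg X (x i') (x j') \<inter> seg X (x k') (x l')"
      using pairings_agree by (metis seg_I)
  qed
qed

end
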